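(* Let $G$ be a finite abelian group of order $n$, let $S\subset G^n$ be the set of bijections $\{1,\dots,n\}\to G$, and let $m\ge0$ be an integer. Let $\mathfrak{M}_m\subset\hat G^n$ be the set of all $m$-sparse $\chi$ whose nontrivial coordinates are killed by a unique partition with $m/2$ parts (so $\mathfrak M_m=\emptyset$ if $m$ is odd). Then \[ \sum_{m\text{-sparse}~\chi\notin\mathfrak{M}_m}|\widehat{1_S}(\chi)|^3 = O_m\Big(\frac1n\Big(\frac{n!}{n^n}\Big)^3\Big), \] with the implied constant depending only on $m$.
   Context: $\hat G$ is the dual group of $G$, written additively, with $0$ the trivial character. For $\chi=(\chi_1,\dots,\chi_n)\in\hat G^n$, $\widehat{1_S}(\chi)=\frac{1}{n^n}\sum_{\pi\in S}\prod_{i=1}^n\chi_i(\pi(i))$. $\chi$ is $m$-sparse if exactly $m$ of its coordinates are nontrivial. If the nontrivial coordinates of $\chi$ are $\chi_{j_1},\dots,\chi_{j_m}$ (indexed by a set $N=\{j_1,\dots,j_m\}$), a partition $\mathcal P$ of $N$ kills them if $\sum_{i\in P}\chi_i=0$ for every part $P\in\mathcal P$. *)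

theory Defs
  imports "HOL-Algebra.Group" "HOL-Library.Disjoint_Sets" "HOL-Library.FuncSet" Complex_Main
begin

definition character :: "'a monoid \<Rightarrow> ('a \<Rightarrow> complex) \<Rightarrow> bool" where
  "character G chi \<longleftrightarrow>
     (\<forall>x\<in>carrier G. cmod (chi x) = 1) \<and>
     (\<forall>x\<in>carrier G. \<forall>y\<in>carrier G. chi (x \<otimes>\<^bsub>G\<^esub> y) = chi x * chi y) \<and>
     (\<forall>x. x \<notin> carrier G \<longrightarrow> chi x = 0)"

definition trivial_char :: "'a monoid \<Rightarrow> 'a \<Rightarrow> complex" where
  "trivial_char G = (\<lambda>x. if x \<in> carrier G then 1 else 0)"

definition charvecs :: "'a monoid \<Rightarrow> nat \<Rightarrow> (nat \<Rightarrow> 'a \<Rightarrow> complex) set" where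
  "charvecs G n = {chi. (\<forall>i\<in>{1..n}. character G (chi i)) \<and>
                        (\<forall>i. i \<notin> {1..n} \<longrightarrow> chi i = (\<lambda>_. 0))}"

definition bijs :: "'a monoid \<Rightarrow> nat \<Rightarrow> (nat \<Rightarrow> 'a) set" where
  "bijs G n = {pi. bij_betw pi {1..n} (carrier G) \<and> pi \<in> extensional {1..n}}"

definition hat1S :: "'a monoid \<Rightarrow> nat \<Rightarrow> (nat \<Rightarrow> 'a \<Rightarrow> complex) \<Rightarrow> complex" where
  "hat1S G n chi = (1 / of_nat n ^ n) * (\<Sum>pi\<in>bijs G n. \<Prod>i\<in>{1..n}. chi i (pi i))"

definition nontriv_coords :: "'a monoid \<Rightarrow> nat \<Rightarrow> (nat \<Rightarrow> 'a \<Rightarrow> complex) \<Rightarrow> nat set" where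
  "nontriv_coords G n chi = {i\<in>{1..n}. chi i \<noteq> trivial_char G}"

definition sparse :: "'a monoid \<Rightarrow> nat \<Rightarrow> nat \<Rightarrow> (nat \<Rightarrow> 'a \<Rightarrow> complex) \<Rightarrow> bool" where
  "sparse G n m chi \<longleftrightarrow> card (nontriv_coords G n chi) = m"

text \<open>A partition P of the set N of nontrivial coordinates kills chi if the sum (in the
  dual group, i.e. pointwise product) of the characters in every part is trivial.\<close>
definition kills :: "'a monoid \<Rightarrow> nat \<Rightarrow> nat set set \<Rightarrow> (nat \<Rightarrow> 'a \<Rightarrow> complex) \<Rightarrow> bool" where
  "kills G n P chi \<longleftrightarrow> partition_on (nontriv_coords G n chi) P \<and>
     (\<forall>p\<in>P. \<forall>x\<in>carrier G. (\<Prod>i\<in>p. chi i x) = 1)"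

text \<open>M_m: m-sparse chi killed by a unique partition with exactly m/2 parts
  (i.e. 2 * number of parts = m; empty for odd m).\<close>
definition frakM :: "'a monoid \<Rightarrow> nat \<Rightarrow> nat \<Rightarrow> (nat \<Rightarrow> 'a \<Rightarrow> complex) set" where
  "frakM G n m = {chi \<in> charvecs G n. sparse G n m chi \<and>
                   (\<exists>!P. kills G n P chi \<and> 2 * card P = m)}"

end

theory Submission
  imports Defs
begin

text \<open>Let N be the set of m nontrivial coordinates of chi. The trivial coordinates contribute a
  factor (n - m)!, so the Fourier coefficient is (n - m)!/n^n times a sum over injections
  N \<rightarrow> G. Inclusion-exclusion on one coordinate at a time bounds that sum by m! times the sum of
  n^|P| over the partitions P of N killing chi. Using n^m (n - m)! \<le> m^m n!, the claim reduces
  to showing that the pairs (chi, P) with chi bad contribute O(n^(3m - 1)) to the sum of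
  n^(3|P|). Now a partition P with |P| < m/2 leaves only n^(m - |P|) choices for chi once N
  is fixed. If |P| = m/2 then P is a perfect matching, and since chi is bad a second perfect
  matching also kills it; together they leave only n^(|P| - 1) choices. With at most n^m
  choices of N, both cases give O(n^(3m - 1)).\<close>

section \<open>Characters of a finite group\<close>

lemma character_one:
  assumes "group G" "character G chi"
  shows "chi \<one>\<^bsub>G\<^esub> = 1"
proof -
  have one: "\<one>\<^bsub>G\<^esub> \<in> carrier G"
    using assms(1) by (simp add: group.is_monoid monoid.one_closed)
  have "chi \<one>\<^bsub>G\<^esub> = chi \<one>\<^bsub>G\<^esub> * chi \<one>\<^bsub>G\<^esub>"
    using assms one unfolding character_def by (metis group.is_monoid monoid.l_one)
  moreover have "chi \<one>\<^bsub>G\<^esub> \<noteq> 0"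
    using assms one unfolding character_def by force
  ultimately show ?thesis by (metis mult_cancel_left1)
qed

lemma character_mult:
  "character G chi \<Longrightarrow> character G psi \<Longrightarrow> character G (\<lambda>x. chi x * psi x)"
  unfolding character_def by (simp add: norm_mult)

lemma character_cnj: "character G chi \<Longrightarrow> character G (\<lambda>x. cnj (chi x))"
  unfolding character_def by simp

lemma character_mult_cnj_self:
  "character G chi \<Longrightarrow> x \<in> carrier G \<Longrightarrow> chi x * cnj (chi x) = 1"
  unfolding character_def by (metis complex_norm_square of_real_1 power_one)

lemma character_eqI:
  "character G chi \<Longrightarrow> character G psi \<Longrightarrow> (\<And>x. x \<in> carrier G \<Longrightarrow> chi x = psi x) \<Longrightarrow> chi = psi"
  unfolding character_def by (metis ext)

lemma character_eq_trivial_char_iff: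
  "character G chi \<Longrightarrow> chi = trivial_char G \<longleftrightarrow> (\<forall>x\<in>carrier G. chi x = 1)"
  unfolding character_def trivial_char_def by (auto simp: fun_eq_iff)

lemma sum_character_eq_0:
  assumes G: "group G" "finite (carrier G)" and chi: "character G chi"
    and x0: "x0 \<in> carrier G" "chi x0 \<noteq> 1"
  shows "(\<Sum>x\<in>carrier G. chi x) = 0"
proof -
  have inj: "inj_on (\<lambda>x. x0 \<otimes>\<^bsub>G\<^esub> x) (carrier G)"
    using group.inj_on_cmult[OF G(1) x0(1)] .
  moreover have "(\<lambda>x. x0 \<otimes>\<^bsub>G\<^esub> x) ` carrier G = carrier G"
    using G x0(1) inj by (intro endo_inj_surj) (auto intro: group.is_monoid monoid.m_closed)
  ultimately have "(\<Sum>x\<in>carrier G. chi x) = (\<Sum>x\<in>carrier G. chi (x0 \<otimes>\<^bsub>G\<^esub> x))"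
    using sum.reindex[OF inj, of chi] by simp
  also have "\<dots> = chi x0 * (\<Sum>x\<in>carrier G. chi x)"
    using chi x0 unfolding character_def by (simp add: sum_distrib_left)
  finally have "(1 - chi x0) * (\<Sum>x\<in>carrier G. chi x) = 0"
    by (simp add: algebra_simps)
  then show ?thesis using x0(2) by simp
qed

lemma sum_character_mult_cnj_eq_0:
  assumes G: "group G" "finite (carrier G)"
    and chi: "character G chi" and psi: "character G psi" and "chi \<noteq> psi"
  shows "(\<Sum>x\<in>carrier G. chi x * cnj (psi x)) = 0"
proof -
  obtain x0 where x0: "x0 \<in> carrier G" "chi x0 \<noteq> psi x0"
    using character_eqI[OF chi psi] \<open>chi \<noteq> psi\<close> by blast
  have "chi x0 * cnj (psi x0) \<noteq> 1"
  proof
    assume one: "chi x0 * cnj (psi x0) = 1"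
    have "chi x0 = chi x0 * (psi x0 * cnj (psi x0))"
      using character_mult_cnj_self[OF psi x0(1)] by simp
    also have "\<dots> = psi x0 * (chi x0 * cnj (psi x0))"
      by (simp only: ac_simps)
    finally show False using x0(2) one by simp
  qed
  then show ?thesis
    using sum_character_eq_0[OF G character_mult[OF chi character_cnj[OF psi]] x0(1)] by blast
qed

text \<open>The characters in X are orthogonal vectors of squared length |G|, while their sum has
  value card X at the identity.\<close>
lemma card_characters_subset_le:
  assumes G: "group G" "finite (carrier G)" and X: "finite X" "\<forall>chi\<in>X. character G chi"
  shows "card X \<le> card (carrier G)"
proof -
  define s where "s x = (\<Sum>chi\<in>X. chi x)" for x
  have "of_real (\<Sum>x\<in>carrier G. cmod (s x) ^ 2) = (\<Sum>x\<in>carrier G. s x * cnj (s x))"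
    by (simp add: complex_norm_square del: of_real_power)
  also have "\<dots> = (\<Sum>chi\<in>X. \<Sum>psi\<in>X. \<Sum>x\<in>carrier G. chi x * cnj (psi x))"
    unfolding s_def by (simp add: sum_product sum.swap[of _ "carrier G"])
  also have "\<dots> = (\<Sum>chi\<in>X. \<Sum>psi\<in>X. if psi = chi then of_nat (card (carrier G)) else 0)"
  proof (intro sum.cong refl)
    fix chi psi assume "chi \<in> X" "psi \<in> X"
    then show "(\<Sum>x\<in>carrier G. chi x * cnj (psi x))
        = (if psi = chi then of_nat (card (carrier G)) else 0)"
      using X sum_character_mult_cnj_eq_0[OF G] character_mult_cnj_self[of G chi] by auto
  qed
  also have "\<dots> = of_nat (card X * card (carrier G))"
    using X(1) by simp
  finally have "(\<Sum>x\<in>carrier G. cmod (s x) ^ 2) = real (card X * card (carrier G))"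
    by (metis of_real_eq_iff of_real_of_nat_eq)
  moreover have "s \<one>\<^bsub>G\<^esub> = (\<Sum>chi\<in>X. 1)"
    using X character_one[OF G(1)] unfolding s_def by (intro sum.cong) auto
  then have "real (card X) ^ 2 \<le> (\<Sum>x\<in>carrier G. cmod (s x) ^ 2)"
    using member_le_sum[of "\<one>\<^bsub>G\<^esub>" "carrier G" "\<lambda>x. cmod (s x) ^ 2"] G
    by (simp add: group.is_monoid monoid.one_closed)
  ultimately have "card X * card X \<le> card X * card (carrier G)"
    by (simp add: power2_eq_square flip: of_nat_mult)
  then show ?thesis by (cases "card X = 0") auto
qed

lemma finite_characters:
  assumes "group G" "finite (carrier G)"
  shows "finite {chi. character G chi}"
proof (rule ccontr)
  assume "infinite {chi. character G chi}"
  then obtain X where "finite X" "card X = Suc (card (carrier G))" "X \<subseteq> {chi. character G chi}"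
    using infinite_arbitrarily_large by blast
  then show False using card_characters_subset_le[OF assms, of X] by auto
qed

lemma card_characters_le:
  "group G \<Longrightarrow> finite (carrier G) \<Longrightarrow> card {chi. character G chi} \<le> card (carrier G)"
  using card_characters_subset_le finite_characters by blast

section \<open>Sums over injections\<close>

definition injections :: "'a monoid \<Rightarrow> nat set \<Rightarrow> (nat \<Rightarrow> 'a) set" where
  "injections G I = {f. inj_on f I \<and> f ` I \<subseteq> carrier G \<and> f \<in> extensional I}"

definition injection_sum :: "'a monoid \<Rightarrow> (nat \<Rightarrow> 'a \<Rightarrow> complex) \<Rightarrow> nat set \<Rightarrow> complex" where
  "injection_sum G chi I = (\<Sum>f\<in>injections G I. \<Prod>i\<in>I. chi i (f i))"

lemma finite_injections: "finite I \<Longrightarrow> finite (carrier G) \<Longrightarrow> finite (injections G I)"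
  by (rule finite_subset[of _ "\<Pi>\<^sub>E i\<in>I. carrier G"])
    (auto simp: injections_def PiE_iff finite_PiE extensional_def)

lemma injections_empty: "injections G {} = {\<lambda>_. undefined}"
  unfolding injections_def by (auto simp: extensional_def)

lemma bij_betw_injections_insert:
  assumes "j \<notin> I"
  shows "bij_betw (\<lambda>(g, x). g(j := x)) (SIGMA g:injections G I. carrier G - g ` I)
           (injections G (insert j I))"
proof (rule bij_betwI[where g="\<lambda>f. (f(j := undefined), f j)"])
  show "(\<lambda>(g, x). g(j := x)) \<in> (SIGMA g:injections G I. carrier G - g ` I) \<rightarrow> injections G (insert j I)"
  proof (clarsimp simp del: fun_upd_apply)
    fix g x assume g: "g \<in> injections G I" and x: "x \<in> carrier G" "x \<notin> g ` I"
    have "\<And>k. k \<in> I \<Longrightarrow> (g(j := x)) k = g k" using assms by auto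
    then have "inj_on (g(j := x)) I" "(g(j := x)) ` I = g ` I"
      using g unfolding injections_def by (auto simp: inj_on_def)
    then show "g(j := x) \<in> injections G (insert j I)"
      using g x assms unfolding injections_def by (auto simp: extensional_def)
  qed
  show "(\<lambda>f. (f(j := undefined), f j)) \<in> injections G (insert j I) \<rightarrow> (SIGMA g:injections G I. carrier G - g ` I)"
  proof
    fix f assume "f \<in> injections G (insert j I)"
    moreover have "\<And>k. k \<in> I \<Longrightarrow> (f(j := undefined)) k = f k" using assms by auto
    ultimately show "(f(j := undefined), f j) \<in> (SIGMA g:injections G I. carrier G - g ` I)"
      using assms unfolding injections_def by (auto simp: inj_on_def extensional_def image_iff)
  qed
  show "(\<lambda>f. (f(j := undefined), f j)) ((\<lambda>(g, x). g(j := x)) gx) = gx"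
    if "gx \<in> (SIGMA g:injections G I. carrier G - g ` I)" for gx
    using that assms by (auto simp: injections_def extensional_def)
qed auto

lemma sum_injections_insert:
  assumes "finite I" "j \<notin> I" "finite (carrier G)"
  shows "(\<Sum>f\<in>injections G (insert j I). F f) =
         (\<Sum>g\<in>injections G I. \<Sum>x\<in>carrier G - g ` I. F (g(j := x)))"
  using sum.reindex_bij_betw[OF bij_betw_injections_insert[OF assms(2)], of F]
    finite_injections[OF assms(1,3)] assms(3)
  by (simp add: sum.Sigma split_def)

text \<open>Inclusion-exclusion on the value of the new coordinate: a choice of image for j is
  admissible unless it collides with the image of some i, and the collisions contribute
  injection sums with the characters of i and j multiplied.\<close>
lemma injection_sum_insert:
  assumes fin: "finite I" "finite (carrier G)" and j: "j \<notin> I"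
  shows "injection_sum G chi (insert j I) = (\<Sum>x\<in>carrier G. chi j x) * injection_sum G chi I
           - (\<Sum>i\<in>I. injection_sum G (chi(i := (\<lambda>x. chi i x * chi j x))) I)"
proof -
  let ?T = "\<Sum>x\<in>carrier G. chi j x"
  let ?p = "\<lambda>g. \<Prod>k\<in>I. chi k (g k)"
  have "injection_sum G chi (insert j I)
      = (\<Sum>g\<in>injections G I. \<Sum>x\<in>carrier G - g ` I. chi j x * ?p g)"
    unfolding injection_sum_def sum_injections_insert[OF fin(1) j fin(2)]
  proof (intro sum.cong refl)
    fix g x
    have "(\<Prod>k\<in>I. chi k ((g(j := x)) k)) = ?p g"
      using j by (intro prod.cong) auto
    then show "(\<Prod>k\<in>insert j I. chi k ((g(j := x)) k)) = chi j x * ?p g"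
      using fin j by simp
  qed
  also have "\<dots> = (\<Sum>g\<in>injections G I. ?T * ?p g - (\<Sum>i\<in>I. chi j (g i) * ?p g))"
  proof (intro sum.cong refl)
    fix g assume g: "g \<in> injections G I"
    have "(\<Sum>x\<in>carrier G - g ` I. chi j x) = ?T - (\<Sum>x\<in>g ` I. chi j x)"
      using g fin by (intro sum_diff) (auto simp: injections_def)
    also have "(\<Sum>x\<in>g ` I. chi j x) = (\<Sum>i\<in>I. chi j (g i))"
      using g by (subst sum.reindex) (auto simp: injections_def)
    finally show "(\<Sum>x\<in>carrier G - g ` I. chi j x * ?p g) = ?T * ?p g - (\<Sum>i\<in>I. chi j (g i) * ?p g)"
      by (simp add: sum_distrib_right[symmetric] left_diff_distrib)
  qed
  also have "\<dots> = ?T * injection_sum G chi I - (\<Sum>i\<in>I. \<Sum>g\<in>injections G I. chi j (g i) * ?p g)"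
    unfolding injection_sum_def
    by (simp add: sum_subtractf sum_distrib_left sum.swap[of _ "injections G I"])
  also have "(\<Sum>i\<in>I. \<Sum>g\<in>injections G I. chi j (g i) * ?p g)
      = (\<Sum>i\<in>I. injection_sum G (chi(i := (\<lambda>x. chi i x * chi j x))) I)"
    unfolding injection_sum_def
  proof (intro sum.cong refl)
    fix i g assume "i \<in> I"
    then show "chi j (g i) * ?p g = (\<Prod>k\<in>I. (chi(i := (\<lambda>x. chi i x * chi j x))) k (g k))"
      using fin by (simp add: prod.remove mult_ac)
  qed
  finally show ?thesis .
qed

lemma injection_sum_insert_trivial:
  assumes fin: "finite I" "finite (carrier G)" and j: "j \<notin> I"
    and triv: "\<forall>x\<in>carrier G. chi j x = 1" and chars: "\<forall>i\<in>I. character G (chi i)"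
  shows "injection_sum G chi (insert j I) = (of_nat (card (carrier G)) - of_nat (card I)) * injection_sum G chi I"
proof -
  have "chi(i := (\<lambda>x. chi i x * chi j x)) = chi" if "i \<in> I" for i
  proof -
    have "chi i x * chi j x = chi i x" for x
      using triv chars that unfolding character_def by (cases "x \<in> carrier G") auto
    then show ?thesis by (auto simp: fun_eq_iff)
  qed
  then show ?thesis
    using injection_sum_insert[OF fin j, of chi] triv by (simp add: algebra_simps)
qed

lemma injection_sum_Un_trivial:
  assumes fin: "finite T" "finite N" "finite (carrier G)" and "N \<inter> T = {}"
    and "\<forall>j\<in>T. \<forall>x\<in>carrier G. chi j x = 1" and "\<forall>i\<in>N \<union> T. character G (chi i)"
  shows "injection_sum G chi (N \<union> T) =
    (\<Prod>k<card T. (of_nat (card (carrier G)) - of_nat (card N + k))) * injection_sum G chi N"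
  using fin(1) assms(4-)
proof (induction T rule: finite_induct)
  case (insert t T)
  have "injection_sum G chi (N \<union> insert t T) = injection_sum G chi (insert t (N \<union> T))"
    by simp
  also have "\<dots> = (of_nat (card (carrier G)) - of_nat (card N + card T)) * injection_sum G chi (N \<union> T)"
    using injection_sum_insert_trivial[of "N \<union> T" G t chi] insert fin
    by (simp add: card_Un_disjoint)
  finally show ?case using insert by (simp add: mult_ac)
qed simp

lemma bijs_eq_injections:
  assumes "finite (carrier G)" "card (carrier G) = n"
  shows "bijs G n = injections G {1..n}"
proof -
  have "bij_betw pi {1..n} (carrier G) \<longleftrightarrow> inj_on pi {1..n} \<and> pi ` {1..n} \<subseteq> carrier G" for pi
  proof
    assume inj: "inj_on pi {1..n} \<and> pi ` {1..n} \<subseteq> carrier G"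
    then have "pi ` {1..n} = carrier G"
      using assms by (intro card_subset_eq) (auto simp: card_image)
    then show "bij_betw pi {1..n} (carrier G)" using inj by (simp add: bij_betw_def)
  qed (auto simp: bij_betw_def)
  then show ?thesis unfolding bijs_def injections_def by blast
qed

lemma charvecs_character: "chi \<in> charvecs G n \<Longrightarrow> i \<in> {1..n} \<Longrightarrow> character G (chi i)"
  unfolding charvecs_def by blast

lemma nontriv_coords_subset: "nontriv_coords G n chi \<subseteq> {1..n}"
  unfolding nontriv_coords_def by auto

lemma finite_nontriv_coords: "finite (nontriv_coords G n chi)"
  using finite_subset[OF nontriv_coords_subset] by blast

lemma charvecs_trivial:
  "chi \<in> charvecs G n \<Longrightarrow> i \<in> {1..n} - nontriv_coords G n chi \<Longrightarrow> \<forall>x\<in>carrier G. chi i x = 1"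
  using character_eq_trivial_char_iff unfolding charvecs_def nontriv_coords_def by blast

lemma hat1S_eq_injection_sum:
  assumes G: "finite (carrier G)" "card (carrier G) = n" and chi: "chi \<in> charvecs G n"
  defines "N \<equiv> nontriv_coords G n chi"
  shows "hat1S G n chi = fact (n - card N) / of_nat n ^ n * injection_sum G chi N"
proof -
  let ?T = "{1..n} - N"
  have N: "N \<subseteq> {1..n}" "finite N"
    unfolding N_def by (rule nontriv_coords_subset, rule finite_nontriv_coords)
  have cT: "card ?T = n - card N"
    using N by (simp add: card_Diff_subset)
  have "injection_sum G chi (N \<union> ?T)
      = (\<Prod>k<card ?T. (of_nat n - of_nat (card N + k))) * injection_sum G chi N"
  proof -
    have "\<forall>j\<in>?T. \<forall>x\<in>carrier G. chi j x = 1"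
      using charvecs_trivial[OF chi] unfolding N_def by blast
    moreover have "\<forall>i\<in>N \<union> ?T. character G (chi i)"
      using N(1) charvecs_character[OF chi] by blast
    ultimately show ?thesis
      using injection_sum_Un_trivial[of ?T N G chi] G N by auto
  qed
  also have "(\<Prod>k<card ?T. (of_nat n - of_nat (card N + k)) :: complex) = fact (card ?T)"
    unfolding fact_prod_rev of_nat_prod atLeast0LessThan
    using cT card_mono[OF _ N(1)] by (intro prod.cong refl) (auto simp: of_nat_diff)
  finally show ?thesis
    using N(1) bijs_eq_injections[OF G] cT
    unfolding hat1S_def injection_sum_def by (simp add: Un_absorb1)
qed

section \<open>Killing partitions\<close>

definition killing_partitions :: "'a monoid \<Rightarrow> (nat \<Rightarrow> 'a \<Rightarrow> complex) \<Rightarrow> nat set \<Rightarrow> nat set set set" where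
  "killing_partitions G chi I =
     {P. partition_on I P \<and> (\<forall>p\<in>P. \<forall>x\<in>carrier G. (\<Prod>i\<in>p. chi i x) = 1)}"

definition killing_weight :: "'a monoid \<Rightarrow> (nat \<Rightarrow> 'a \<Rightarrow> complex) \<Rightarrow> nat set \<Rightarrow> real" where
  "killing_weight G chi I = (\<Sum>P\<in>killing_partitions G chi I. real (card (carrier G)) ^ card P)"

lemma kills_iff_killing_partitions:
  "kills G n P chi \<longleftrightarrow> P \<in> killing_partitions G chi (nontriv_coords G n chi)"
  unfolding kills_def killing_partitions_def by simp

lemma killing_partitionsD:
  assumes "P \<in> killing_partitions G chi I"
  shows "partition_on I P" and "p \<in> P \<Longrightarrow> p \<subseteq> I" and "p \<in> P \<Longrightarrow> p \<noteq> {}"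
    and "p \<in> P \<Longrightarrow> x \<in> carrier G \<Longrightarrow> (\<Prod>k\<in>p. chi k x) = 1"
  using assms unfolding killing_partitions_def partition_on_def by auto

lemma killing_partitions_subset_Pow_Pow: "killing_partitions G chi I \<subseteq> Pow (Pow I)"
  unfolding killing_partitions_def partition_on_def by auto

lemma finite_killing_partitions: "finite I \<Longrightarrow> finite (killing_partitions G chi I)"
  using finite_subset[OF killing_partitions_subset_Pow_Pow] by blast

lemma card_killing_partitions_le:
  "finite I \<Longrightarrow> card (killing_partitions G chi I) \<le> 2 ^ 2 ^ card I"
  using card_mono[OF _ killing_partitions_subset_Pow_Pow] by (simp add: card_Pow)

lemma killing_weight_empty: "killing_weight G chi {} = 1"
proof -
  have "killing_partitions G chi {} = {{}}"
    unfolding killing_partitions_def by (auto simp: partition_on_empty)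
  then show ?thesis unfolding killing_weight_def by simp
qed

lemma killing_weight_nonneg: "0 \<le> killing_weight G chi I"
  unfolding killing_weight_def by (simp add: sum_nonneg)

lemma killing_weight_le_image:
  assumes "finite J" and "inj_on h (killing_partitions G psi I)"
    and "h ` killing_partitions G psi I \<subseteq> killing_partitions G chi J"
    and "\<And>P. P \<in> killing_partitions G psi I \<Longrightarrow> card (h P) = card P + d"
  shows "real (card (carrier G)) ^ d * killing_weight G psi I \<le> killing_weight G chi J"
proof -
  let ?w = "\<lambda>P. real (card (carrier G)) ^ card P"
  have "real (card (carrier G)) ^ d * killing_weight G psi I
      = (\<Sum>P\<in>killing_partitions G psi I. ?w (h P))"
    unfolding killing_weight_def sum_distrib_left using assms(4) by (simp add: power_add mult_ac)
  also have "\<dots> = (\<Sum>Q\<in>h ` killing_partitions G psi I. ?w Q)"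
    using sum.reindex[OF assms(2), of ?w] by (simp add: comp_def)
  also have "\<dots> \<le> killing_weight G chi J"
    unfolding killing_weight_def
    using assms(3) finite_killing_partitions[OF assms(1)] by (intro sum_mono2) auto
  finally show ?thesis .
qed

lemma insert_singleton_killing_partition:
  assumes "finite I" "j \<notin> I" "\<forall>x\<in>carrier G. chi j x = 1" "P \<in> killing_partitions G chi I"
  shows "insert {j} P \<in> killing_partitions G chi (insert j I)"
    and "card (insert {j} P) = card P + 1"
proof -
  have part: "partition_on I P" using assms(4) by (rule killing_partitionsD)
  then have "{j} \<notin> P" using assms(2) by (auto simp: partition_on_def)
  then show "card (insert {j} P) = card P + 1"
    using finite_elements[OF assms(1) part] by simp
  have "partition_on (insert j I) (insert {j} P)"
    using part assms(2) by (subst partition_on_insert) (auto simp: disjnt_def partition_on_def)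
  then show "insert {j} P \<in> killing_partitions G chi (insert j I)"
    using assms(3,4) unfolding killing_partitions_def by auto
qed

lemma killing_weight_insert_trivial:
  assumes "finite I" "j \<notin> I" "\<forall>x\<in>carrier G. chi j x = 1"
  shows "real (card (carrier G)) * killing_weight G chi I \<le> killing_weight G chi (insert j I)"
proof -
  have inj: "inj_on (insert {j}) (killing_partitions G chi I)"
  proof (rule inj_on_inverseI[where g="\<lambda>Q. Q - {{j}}"])
    fix P assume "P \<in> killing_partitions G chi I"
    then have "{j} \<notin> P" using assms(2) killing_partitionsD(2) by blast
    then show "insert {j} P - {{j}} = P" by auto
  qed
  have sub: "insert {j} ` killing_partitions G chi I \<subseteq> killing_partitions G chi (insert j I)"
    using insert_singleton_killing_partition(1)[of I j G chi, OF assms] by blast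
  have "real (card (carrier G)) ^ 1 * killing_weight G chi I \<le> killing_weight G chi (insert j I)"
    by (rule killing_weight_le_image[OF _ inj sub])
      (use assms(1) insert_singleton_killing_partition(2)[of I j G chi, OF assms] in auto)
  then show ?thesis by simp
qed

lemma norm_sum_character_mult_killing_weight_le:
  assumes G: "group G" "finite (carrier G)" and "finite I" "j \<notin> I" "character G (chi j)"
  shows "cmod (\<Sum>x\<in>carrier G. chi j x) * killing_weight G chi I \<le> killing_weight G chi (insert j I)"
proof (cases "\<forall>x\<in>carrier G. chi j x = 1")
  case True
  then show ?thesis
    using killing_weight_insert_trivial[of I j G chi] assms by simp
next
  case False
  then have "(\<Sum>x\<in>carrier G. chi j x) = 0" using sum_character_eq_0[OF G assms(5)] by blast
  then show ?thesis by (simp add: killing_weight_nonneg)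
qed

definition merge_block :: "nat \<Rightarrow> nat \<Rightarrow> nat set set \<Rightarrow> nat set set" where
  "merge_block i j P = (\<lambda>p. if i \<in> p then insert j p else p) ` P"

lemma
  assumes "j \<notin> \<Union>P"
  shows merge_block_inverse: "(\<lambda>q. q - {j}) ` merge_block i j P = P"
    and card_merge_block: "card (merge_block i j P) = card P"
proof -
  have inv: "(if i \<in> p then insert j p else p) - {j} = p" if "p \<in> P" for p
    using that assms by auto
  then show "(\<lambda>q. q - {j}) ` merge_block i j P = P"
    unfolding merge_block_def image_image by simp
  show "card (merge_block i j P) = card P"
    unfolding merge_block_def using inv by (intro card_image inj_on_inverseI)
qed

lemma merge_block_killing_partition:
  assumes fin: "finite I" and j: "j \<notin> I" and i: "i \<in> I"
    and P: "P \<in> killing_partitions G (chi(i := (\<lambda>x. chi i x * chi j x))) I"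
  shows "merge_block i j P \<in> killing_partitions G chi (insert j I)"
proof -
  have part: "partition_on I P" using P by (rule killing_partitionsD)
  have jP: "j \<notin> p" and fp: "finite p" if "p \<in> P" for p
    using that killing_partitionsD(2)[OF P] j fin finite_subset by blast+
  obtain p0 where p0: "p0 \<in> P" "i \<in> p0"
    using i partition_onD1[OF part] by blast
  have "partition_on (insert j I) (merge_block i j P)"
  proof (rule partition_onI)
    show "\<Union>(merge_block i j P) = insert j I"
      unfolding merge_block_def using p0 partition_onD1[OF part] by (auto split: if_splits)
    show "{} \<notin> merge_block i j P"
      unfolding merge_block_def using partition_onD3[OF part] by (auto split: if_splits)
    fix p q assume "p \<in> merge_block i j P" "q \<in> merge_block i j P" "p \<noteq> q"
    then obtain p' q' where pq: "p' \<in> P" "q' \<in> P"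
      "p = (if i \<in> p' then insert j p' else p')" "q = (if i \<in> q' then insert j q' else q')"
      unfolding merge_block_def by blast
    moreover have "p' \<noteq> q'" using pq \<open>p \<noteq> q\<close> by auto
    ultimately have "disjnt p' q'"
      using pairwiseD[OF partition_onD2[OF part]] by blast
    then show "disjnt p q"
      using pq jP by (auto simp: disjnt_def)
  qed
  moreover have "(\<Prod>k\<in>q. chi k x) = 1"
    if "q \<in> merge_block i j P" "x \<in> carrier G" for q x
  proof -
    obtain p where p: "p \<in> P" "q = (if i \<in> p then insert j p else p)"
      using \<open>q \<in> merge_block i j P\<close> unfolding merge_block_def by blast
    have "(\<Prod>k\<in>q. chi k x) = (\<Prod>k\<in>p. (chi(i := (\<lambda>x. chi i x * chi j x))) k x)"
    proof (cases "i \<in> p")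
      case True
      then show ?thesis
        using p jP[OF p(1)] fp[OF p(1)] by (simp add: prod.remove mult_ac)
    next
      case False
      then show ?thesis using p by (intro prod.cong) auto
    qed
    then show ?thesis using killing_partitionsD(4)[OF P p(1) that(2)] by simp
  qed
  ultimately show ?thesis unfolding killing_partitions_def by blast
qed

lemma killing_weight_merge_le:
  assumes "finite I" "j \<notin> I" "i \<in> I"
  shows "killing_weight G (chi(i := (\<lambda>x. chi i x * chi j x))) I \<le> killing_weight G chi (insert j I)"
proof -
  let ?K = "killing_partitions G (chi(i := (\<lambda>x. chi i x * chi j x))) I"
  have jP: "j \<notin> \<Union>P" if "P \<in> ?K" for P
    using that assms(2) partition_onD1[OF killing_partitionsD(1)] by blast
  have inj: "inj_on (merge_block i j) ?K"
    using merge_block_inverse[OF jP] by (rule inj_on_inverseI)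
  have sub: "merge_block i j ` ?K \<subseteq> killing_partitions G chi (insert j I)"
    using merge_block_killing_partition[OF assms] by blast
  have "real (card (carrier G)) ^ 0 * killing_weight G (chi(i := (\<lambda>x. chi i x * chi j x))) I
      \<le> killing_weight G chi (insert j I)"
    by (rule killing_weight_le_image[OF _ inj sub]) (use assms(1) card_merge_block[OF jP] in auto)
  then show ?thesis by simp
qed

text \<open>The recursion of injection_sum_insert is matched term by term with killing
  partitions of insert j I: the main term with those containing the singleton {j}, the
  collision of j with i with those obtained by merging j into the block of i.\<close>
lemma norm_injection_sum_le:
  assumes G: "group G" "finite (carrier G)" and "finite I" and "\<forall>i\<in>I. character G (chi i)"
  shows "cmod (injection_sum G chi I) \<le> fact (card I) * killing_weight G chi I"
  using assms(3,4)
proof (induction I arbitrary: chi rule: finite_induct)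
  case empty
  then show ?case by (simp add: injection_sum_def injections_empty killing_weight_empty)
next
  case (insert j I)
  let ?T = "\<Sum>x\<in>carrier G. chi j x"
  let ?W = "killing_weight G chi (insert j I)"
  define chi' where "chi' i = chi(i := (\<lambda>x. chi i x * chi j x))" for i
  have "cmod ?T * killing_weight G chi I \<le> ?W"
    using norm_sum_character_mult_killing_weight_le[OF G insert.hyps] insert.prems by simp
  moreover have "cmod (injection_sum G chi I) \<le> fact (card I) * killing_weight G chi I"
    using insert.IH insert.prems by simp
  ultimately have "cmod ?T * cmod (injection_sum G chi I) \<le> fact (card I) * ?W"
    by (smt (verit) fact_ge_zero mult_left_mono mult.left_commute norm_ge_zero)
  moreover have "cmod (injection_sum G (chi' i) I) \<le> fact (card I) * ?W" if "i \<in> I" for i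
  proof -
    have "\<forall>k\<in>I. character G (chi' i k)"
      using insert.prems that unfolding chi'_def by (auto intro: character_mult)
    then have "cmod (injection_sum G (chi' i) I) \<le> fact (card I) * killing_weight G (chi' i) I"
      using insert.IH by blast
    also have "\<dots> \<le> fact (card I) * ?W"
      using killing_weight_merge_le[OF insert.hyps that, of G chi] unfolding chi'_def
      by (intro mult_left_mono) auto
    finally show ?thesis .
  qed
  then have "(\<Sum>i\<in>I. cmod (injection_sum G (chi' i) I)) \<le> card I * (fact (card I) * ?W)"
    by (rule sum_bounded_above)
  moreover have "cmod (injection_sum G chi (insert j I))
      \<le> cmod ?T * cmod (injection_sum G chi I) + (\<Sum>i\<in>I. cmod (injection_sum G (chi' i) I))"
    unfolding injection_sum_insert[OF insert.hyps(1) G(2) insert.hyps(2)] chi'_def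
    by (rule order_trans[OF norm_triangle_ineq4]) (simp add: norm_mult norm_sum)
  ultimately have "cmod (injection_sum G chi (insert j I)) \<le> (1 + card I) * (fact (card I) * ?W)"
    by (simp add: algebra_simps)
  then show ?case
    using insert.hyps by (simp add: algebra_simps)
qed

lemma card_block_ge_2:
  assumes chi: "chi \<in> charvecs G n" and P: "P \<in> killing_partitions G chi (nontriv_coords G n chi)"
    and p: "p \<in> P"
  shows "2 \<le> card p"
proof (rule ccontr)
  assume "\<not> 2 \<le> card p"
  moreover have "finite p" "p \<noteq> {}"
    using killing_partitionsD(2,3)[OF P p] finite_nontriv_coords finite_subset by blast+
  ultimately have "card p = 1"
    using card_gt_0_iff[of p] by linarith
  then obtain i where i: "p = {i}"
    by (rule card_1_singletonE)
  then have "i \<in> nontriv_coords G n chi"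
    using killing_partitionsD(2)[OF P p] by simp
  moreover have "\<forall>x\<in>carrier G. chi i x = 1"
    using killing_partitionsD(4)[OF P p] i by simp
  ultimately show False
    using character_eq_trivial_char_iff[OF charvecs_character[OF chi]]
    unfolding nontriv_coords_def by auto
qed

lemma
  assumes chi: "chi \<in> charvecs G n" and P: "P \<in> killing_partitions G chi (nontriv_coords G n chi)"
  shows two_card_killing_partition_le: "2 * card P \<le> card (nontriv_coords G n chi)"
    and card_blocks_eq_2: "2 * card P = card (nontriv_coords G n chi) \<Longrightarrow> p \<in> P \<Longrightarrow> card p = 2"
proof -
  let ?N = "nontriv_coords G n chi"
  have part: "partition_on ?N P" using P by (rule killing_partitionsD)
  have finP: "finite P" using finite_elements[OF finite_nontriv_coords part] .
  have ge: "\<And>p. p \<in> P \<Longrightarrow> 2 \<le> card p" using card_block_ge_2[OF chi P] .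
  have "finite p" if "p \<in> P" for p
    using killing_partitionsD(2)[OF P that] finite_nontriv_coords finite_subset by blast
  then have cN: "card ?N = (\<Sum>p\<in>P. card p)"
    using product_partition[OF part] by blast
  show "2 * card P \<le> card ?N"
    using sum_mono[of P "\<lambda>_. 2" card] ge cN by (simp add: mult.commute)
  assume eq: "2 * card P = card ?N" and p: "p \<in> P"
  show "card p = 2"
  proof (rule ccontr)
    assume "card p \<noteq> 2"
    then have "2 < card p" using ge[OF p] by simp
    then have "(\<Sum>p\<in>P. 2) < (\<Sum>p\<in>P. card p)"
      using finP ge p by (intro sum_strict_mono_ex1) auto
    then show False using cN eq by (simp add: mult.commute)
  qed
qed

section \<open>Counting character vectors\<close>

lemma card_charvecs_le_if_determined:
  assumes G: "group G" "finite (carrier G)"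
    and Y: "Y \<subseteq> charvecs G n" and F: "F \<subseteq> {1..n}"
    and determined: "\<And>chi psi. chi \<in> Y \<Longrightarrow> psi \<in> Y \<Longrightarrow> (\<forall>i\<in>F. chi i = psi i) \<Longrightarrow> chi = psi"
  shows "finite Y" and "card Y \<le> card (carrier G) ^ card F"
proof -
  let ?Ch = "{chi. character G chi}"
  have "inj_on (\<lambda>chi. restrict chi F) Y"
  proof (rule inj_onI)
    fix chi psi assume "chi \<in> Y" "psi \<in> Y" and eq: "restrict chi F = restrict psi F"
    have "chi i = psi i" if "i \<in> F" for i
      using fun_cong[OF eq, of i] that by simp
    then show "chi = psi" using determined[OF \<open>chi \<in> Y\<close> \<open>psi \<in> Y\<close>] by blast
  qed
  moreover have sub: "(\<lambda>chi. restrict chi F) ` Y \<subseteq> (\<Pi>\<^sub>E i\<in>F. ?Ch)"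
  proof
    fix f assume "f \<in> (\<lambda>chi. restrict chi F) ` Y"
    then obtain chi where chi: "chi \<in> Y" "f = restrict chi F" by blast
    have "\<forall>i\<in>F. character G (chi i)"
      using chi(1) Y F charvecs_character[of chi G n] by blast
    then show "f \<in> (\<Pi>\<^sub>E i\<in>F. ?Ch)"
      using chi(2) by (simp add: restrict_PiE_iff)
  qed
  moreover have fin: "finite (\<Pi>\<^sub>E i\<in>F. ?Ch)"
    using finite_subset[OF F] finite_characters[OF G(1,2)] by (blast intro: finite_PiE)
  ultimately show "finite Y"
    using finite_imageD[OF finite_subset[OF sub fin]] by blast
  have "card Y \<le> card (\<Pi>\<^sub>E i\<in>F. ?Ch)"
    using card_inj_on_le[OF \<open>inj_on _ Y\<close> _ fin] sub by blast
  also have "\<dots> = card ?Ch ^ card F"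
    using finite_subset[OF F] by (simp add: card_PiE)
  also have "\<dots> \<le> card (carrier G) ^ card F"
    using card_characters_le[OF G] by (simp add: power_mono)
  finally show "card Y \<le> card (carrier G) ^ card F" .
qed

lemma finite_charvecs:
  assumes "group G" "finite (carrier G)"
  shows "finite (charvecs G n)"
proof -
  have "chi = psi" if "chi \<in> charvecs G n" "psi \<in> charvecs G n" "\<forall>i\<in>{1..n}. chi i = psi i" for chi psi
  proof
    fix i show "chi i = psi i"
      using that unfolding charvecs_def by (cases "i \<in> {1..n}") auto
  qed
  then show ?thesis
    using card_charvecs_le_if_determined(1)[OF assms order.refl order.refl] by blast
qed

lemma partition_on_block_eq:
  "partition_on N P \<Longrightarrow> p \<in> P \<Longrightarrow> q \<in> P \<Longrightarrow> x \<in> p \<Longrightarrow> x \<in> q \<Longrightarrow> p = q"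
  using partition_onD2 unfolding pairwise_def disjnt_def by blast

lemma representative_notin_image:
  assumes "partition_on N P" "\<forall>p\<in>P. r p \<in> p" "p \<in> P" "x \<in> p" "x \<noteq> r p"
  shows "x \<notin> r ` P"
proof
  assume "x \<in> r ` P"
  then obtain q where "q \<in> P" "x = r q" by blast
  then show False using partition_on_block_eq[OF assms(1) assms(3) \<open>q \<in> P\<close>] assms(2,4,5) by auto
qed

lemma card_diff_representatives:
  assumes P: "partition_on N P" and "finite N" and r: "\<forall>p\<in>P. r p \<in> p"
  shows "card (N - r ` P) = card N - card P"
proof -
  have "inj_on r P"
    using r partition_on_block_eq[OF P] by (intro inj_onI) metis
  moreover have "r ` P \<subseteq> N" using r partition_onD1[OF P] by auto
  moreover have "finite (r ` P)" using finite_elements[OF \<open>finite N\<close> P] by simp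
  ultimately show ?thesis by (simp add: card_Diff_subset card_image)
qed

lemma card_partition_on_uniform:
  assumes P: "partition_on N P" and "finite N" and "\<forall>p\<in>P. card p = k"
  shows "card N = k * card P"
proof -
  have "finite p" if "p \<in> P" for p
    by (rule finite_subset[OF _ \<open>finite N\<close>]) (use that partition_onD1[OF P] in blast)
  then have "card N = (\<Sum>p\<in>P. card p)"
    using product_partition[OF P] by blast
  also have "\<dots> = (\<Sum>p\<in>P. k)"
    using assms(3) by (intro sum.cong) auto
  finally show ?thesis by simp
qed

lemma killing_block_determines:
  assumes "finite I" "P \<in> killing_partitions G chi I" "P \<in> killing_partitions G psi I"
    and "p \<in> P" "i \<in> p" "\<forall>k\<in>p - {i}. chi k = psi k" "x \<in> carrier G"
  shows "chi i x = psi i x"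
proof -
  let ?rest = "\<Prod>k\<in>p - {i}. chi k x"
  have fin: "finite p"
    using killing_partitionsD(2)[OF assms(2,4)] assms(1) finite_subset by blast
  have "chi i x * ?rest = 1" "psi i x * ?rest = 1"
    using killing_partitionsD(4)[OF assms(2,4,7)] killing_partitionsD(4)[OF assms(3,4,7)]
      fin assms(5,6) by (simp_all add: prod.remove)
  then have "?rest \<noteq> 0" "chi i x * ?rest = psi i x * ?rest" by auto
  then show ?thesis by simp
qed

lemma charvecs_eqI:
  assumes chi: "chi \<in> charvecs G n" and psi: "psi \<in> charvecs G n"
    and N: "nontriv_coords G n chi = N" "nontriv_coords G n psi = N" and eq: "\<forall>i\<in>N. chi i = psi i"
  shows "chi = psi"
proof
  fix i show "chi i = psi i"
  proof (cases "i \<in> {1..n}")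
    case True
    have "chi i = trivial_char G" "psi i = trivial_char G" if "i \<notin> N"
      using that True N unfolding nontriv_coords_def by blast+
    then show ?thesis using eq by (cases "i \<in> N") auto
  next
    case False
    then show ?thesis using chi psi unfolding charvecs_def by simp
  qed
qed

lemma charvecs_eq_if_eq_off_representatives:
  assumes chi: "chi \<in> charvecs G n" "nontriv_coords G n chi = N" "P \<in> killing_partitions G chi N"
    and psi: "psi \<in> charvecs G n" "nontriv_coords G n psi = N" "P \<in> killing_partitions G psi N"
    and r: "\<forall>p\<in>P. r p \<in> p" and eq: "\<forall>i\<in>N - r ` P. chi i = psi i"
  shows "chi = psi"
proof (rule charvecs_eqI[OF chi(1) psi(1) chi(2) psi(2)], rule ballI)
  have finN: "finite N" using chi(2) finite_nontriv_coords by blast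
  have part: "partition_on N P" using chi(3) by (rule killing_partitionsD)
  fix i assume i: "i \<in> N"
  show "chi i = psi i"
  proof (cases "i \<in> r ` P")
    case True
    then obtain p where p: "p \<in> P" "i = r p" by blast
    have "k \<notin> r ` P" if "k \<in> p - {i}" for k
    proof
      assume "k \<in> r ` P"
      then obtain q where "q \<in> P" "k = r q" by blast
      then show False
        using partition_on_block_eq[OF part p(1) \<open>q \<in> P\<close>] r that p by auto
    qed
    then have "\<forall>k\<in>p - {i}. chi k = psi k"
      using eq killing_partitionsD(2)[OF chi(3) p(1)] by blast
    then have "chi i x = psi i x" if "x \<in> carrier G" for x
      using killing_block_determines[OF finN chi(3) psi(3) p(1) _ _ that] r p by blast
    moreover have "i \<in> {1..n}" using i chi(2) nontriv_coords_subset by blast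
    ultimately show ?thesis
      using character_eqI charvecs_character[OF chi(1)] charvecs_character[OF psi(1)] by blast
  qed (use eq i in blast)
qed

lemma card_killed_le:
  assumes G: "group G" "finite (carrier G)" and N: "N \<subseteq> {1..n}" and part: "partition_on N P"
  shows "card {chi\<in>charvecs G n. nontriv_coords G n chi = N \<and> P \<in> killing_partitions G chi N}
           \<le> card (carrier G) ^ (card N - card P)"
proof -
  define r where "r p = (SOME x. x \<in> p)" for p :: "nat set"
  have r: "\<forall>p\<in>P. r p \<in> p"
    using partition_onD3[OF part] unfolding r_def by (metis some_in_eq)
  have "card (N - r ` P) = card N - card P"
    using card_diff_representatives[OF part finite_subset[OF N] r] by simp
  moreover have "card {chi\<in>charvecs G n. nontriv_coords G n chi = N \<and> P \<in> killing_partitions G chi N}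
      \<le> card (carrier G) ^ card (N - r ` P)"
  proof (rule card_charvecs_le_if_determined(2)[OF G])
    fix chi psi
    assume "chi \<in> {chi\<in>charvecs G n. nontriv_coords G n chi = N \<and> P \<in> killing_partitions G chi N}"
      "psi \<in> {chi\<in>charvecs G n. nontriv_coords G n chi = N \<and> P \<in> killing_partitions G chi N}"
      "\<forall>i\<in>N - r ` P. chi i = psi i"
    then show "chi = psi"
      using charvecs_eq_if_eq_off_representatives[OF _ _ _ _ _ _ r] by blast
  qed (use N in auto)
  ultimately show ?thesis by simp
qed

lemma partition_on_subset_eq:
  assumes P: "partition_on N P" and Q: "partition_on N Q" and "P \<subseteq> Q"
  shows "P = Q"
proof (rule antisym[OF \<open>P \<subseteq> Q\<close>], rule subsetI)
  fix q assume q: "q \<in> Q"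
  then obtain x where x: "x \<in> q" using partition_onD3[OF Q] by (metis ex_in_conv)
  then obtain p where p: "p \<in> P" "x \<in> p" using q partition_onD1[OF Q] partition_onD1[OF P] by blast
  then have "p = q" using partition_on_block_eq[OF Q _ q] \<open>P \<subseteq> Q\<close> x by blast
  then show "q \<in> P" using p by simp
qed

lemma card_2_obtain:
  assumes "card q = 2" "a \<in> q"
  obtains c where "q = {a, c}" "a \<noteq> c"
proof -
  have "card (q - {a}) = 1" using assms by simp
  then obtain c where "q - {a} = {c}" by (rule card_1_singletonE)
  then show thesis using that assms(2) by blast
qed

lemma distinct_pairings_path:
  assumes P: "partition_on N P" "\<forall>p\<in>P. card p = 2"
    and Q: "partition_on N Q" "\<forall>q\<in>Q. card q = 2" and "P \<noteq> Q"
  obtains a b c d where "{a, b} \<in> P" "{c, d} \<in> P" "{a, c} \<in> Q" "{a, b} \<noteq> {c, d}"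
    "a \<noteq> b" "a \<noteq> c" "c \<noteq> d"
proof -
  obtain p where p: "p \<in> P" "p \<notin> Q"
    using partition_on_subset_eq[OF P(1) Q(1)] \<open>P \<noteq> Q\<close> by blast
  then obtain a b where ab: "p = {a, b}" "a \<noteq> b" using P(2) by (meson card_2_iff)
  then obtain q where q: "q \<in> Q" "a \<in> q"
    using p(1) partition_onD1[OF P(1)] partition_onD1[OF Q(1)] by blast
  moreover have "card q = 2" using Q(2) q(1) by blast
  ultimately obtain c where c: "q = {a, c}" "a \<noteq> c"
    using card_2_obtain by metis
  then obtain p' where p': "p' \<in> P" "c \<in> p'"
    using q partition_onD1[OF P(1)] partition_onD1[OF Q(1)] by blast
  moreover have "card p' = 2" using P(2) p'(1) by blast
  ultimately obtain d where d: "p' = {c, d}" "c \<noteq> d"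
    using card_2_obtain by metis
  have "p \<noteq> p'"
  proof
    assume "p = p'"
    then have "c = b" using p' ab c by auto
    then show False using p q c ab by (simp add: insert_commute)
  qed
  then show thesis using that ab c d p p' q by blast
qed

lemma card_killed_by_two_pairings_le:
  assumes G: "group G" "finite (carrier G)" and N: "N \<subseteq> {1..n}"
    and P: "partition_on N P" "\<forall>p\<in>P. card p = 2"
    and Q: "partition_on N Q" "\<forall>q\<in>Q. card q = 2" and "P \<noteq> Q"
  shows "card {chi\<in>charvecs G n. nontriv_coords G n chi = N \<and>
                P \<in> killing_partitions G chi N \<and> Q \<in> killing_partitions G chi N}
           \<le> card (carrier G) ^ (card P - 1)"
proof -
  obtain a b c d where path: "{a, b} \<in> P" "{c, d} \<in> P" "{a, c} \<in> Q" "{a, b} \<noteq> {c, d}"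
    "a \<noteq> b" "a \<noteq> c" "c \<noteq> d"
    using distinct_pairings_path[OF P Q \<open>P \<noteq> Q\<close>] by blast
  have finN: "finite N" using N finite_subset by blast
  define r where "r p = (if p = {a, b} then b else if p = {c, d} then d else SOME x. x \<in> p)" for p
  have r: "\<forall>p\<in>P. r p \<in> p"
    using partition_onD3[OF P(1)] path(1,2) unfolding r_def by (auto simp: some_in_eq)
  have "r {a, b} = b" "r {c, d} = d"
    using path(4) unfolding r_def by simp_all
  then have a_c: "a \<notin> r ` P" "c \<notin> r ` P"
    using representative_notin_image[OF P(1) r path(1), of a]
      representative_notin_image[OF P(1) r path(2), of c] path(5,7) by simp_all
  have cN: "card N = 2 * card P"
    using card_partition_on_uniform[OF P(1) finN P(2)] .
  let ?F = "N - r ` P - {c}"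
  have "card ?F = card P - 1"
  proof -
    have "card (N - r ` P) = card N - card P"
      using card_diff_representatives[OF P(1) finN r] .
    moreover have "c \<in> N" using path(3) partition_onD1[OF Q(1)] by blast
    ultimately show ?thesis using a_c(2) finN cN by (simp add: card_Diff_singleton)
  qed
  moreover have "card {chi\<in>charvecs G n. nontriv_coords G n chi = N \<and>
                P \<in> killing_partitions G chi N \<and> Q \<in> killing_partitions G chi N}
      \<le> card (carrier G) ^ card ?F"
  proof (rule card_charvecs_le_if_determined(2)[OF G])
    fix chi psi
    assume chi: "chi \<in> {chi\<in>charvecs G n. nontriv_coords G n chi = N \<and>
                P \<in> killing_partitions G chi N \<and> Q \<in> killing_partitions G chi N}"
      and psi: "psi \<in> {chi\<in>charvecs G n. nontriv_coords G n chi = N \<and>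
                P \<in> killing_partitions G chi N \<and> Q \<in> killing_partitions G chi N}"
      and eq: "\<forall>i\<in>?F. chi i = psi i"
    have cv: "chi \<in> charvecs G n" "psi \<in> charvecs G n"
      and kill: "Q \<in> killing_partitions G chi N" "Q \<in> killing_partitions G psi N"
      using chi psi by auto
    have "a \<in> ?F" using path(1,6) a_c(1) partition_onD1[OF P(1)] by blast
    then have "\<forall>k\<in>{a, c} - {c}. chi k = psi k" using eq by auto
    then have "chi c x = psi c x" if "x \<in> carrier G" for x
      using killing_block_determines[OF finN kill path(3) _ _ that] by blast
    moreover have "c \<in> {1..n}" using N path(3) partition_onD1[OF Q(1)] by blast
    ultimately have "chi c = psi c"
      using character_eqI[OF charvecs_character[OF cv(1)] charvecs_character[OF cv(2)]] by blast
    then have "\<forall>i\<in>N - r ` P. chi i = psi i" using eq by blast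
    then show "chi = psi"
      using charvecs_eq_if_eq_off_representatives[OF _ _ _ _ _ _ r] chi psi by blast
  qed (use N in auto)
  ultimately show ?thesis by simp
qed

definition bad_charvecs :: "'a monoid \<Rightarrow> nat \<Rightarrow> nat \<Rightarrow> (nat \<Rightarrow> 'a \<Rightarrow> complex) set" where
  "bad_charvecs G n m = {chi\<in>charvecs G n. sparse G n m chi \<and> chi \<notin> frakM G n m}"

lemma finite_bad_charvecs: "group G \<Longrightarrow> finite (carrier G) \<Longrightarrow> finite (bad_charvecs G n m)"
  unfolding bad_charvecs_def by (rule finite_subset[OF _ finite_charvecs]) auto

lemma bad_killed_by_pairing_subset:
  assumes N: "card N = m" and P: "2 * card P = m"
  shows "{chi\<in>bad_charvecs G n m. nontriv_coords G n chi = N \<and> P \<in> killing_partitions G chi N}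
    \<subseteq> (\<Union>Q\<in>{Q\<in>Pow (Pow N). Q \<noteq> P \<and> partition_on N Q \<and> (\<forall>q\<in>Q. card q = 2)}.
          {chi\<in>charvecs G n. nontriv_coords G n chi = N \<and>
             P \<in> killing_partitions G chi N \<and> Q \<in> killing_partitions G chi N})"
proof
  fix chi
  assume "chi \<in> {chi\<in>bad_charvecs G n m. nontriv_coords G n chi = N \<and> P \<in> killing_partitions G chi N}"
  then have chi: "chi \<in> charvecs G n" "sparse G n m chi" "chi \<notin> frakM G n m"
    "nontriv_coords G n chi = N" "P \<in> killing_partitions G chi N"
    unfolding bad_charvecs_def by auto
  then have "kills G n P chi \<and> 2 * card P = m"
    using P kills_iff_killing_partitions by metis
  moreover have "\<not> (\<exists>!Q. kills G n Q chi \<and> 2 * card Q = m)"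
    using chi(1-3) unfolding frakM_def by blast
  ultimately obtain Q where Q: "kills G n Q chi" "2 * card Q = m" "Q \<noteq> P" by blast
  then have QK: "Q \<in> killing_partitions G chi N"
    using chi(4) kills_iff_killing_partitions by metis
  then have "\<forall>q\<in>Q. card q = 2"
    using card_blocks_eq_2[of chi G n Q] chi(1,4) Q(2) N by simp
  then have "Q \<in> {Q\<in>Pow (Pow N). Q \<noteq> P \<and> partition_on N Q \<and> (\<forall>q\<in>Q. card q = 2)}"
    using QK Q(3) killing_partitions_subset_Pow_Pow killing_partitionsD(1) by blast
  then show "chi \<in> (\<Union>Q\<in>{Q\<in>Pow (Pow N). Q \<noteq> P \<and> partition_on N Q \<and> (\<forall>q\<in>Q. card q = 2)}.
          {chi\<in>charvecs G n. nontriv_coords G n chi = N \<and>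
             P \<in> killing_partitions G chi N \<and> Q \<in> killing_partitions G chi N})"
    using chi QK by blast
qed

lemma card_bad_killed_by_pairing_le:
  assumes G: "group G" "finite (carrier G)" and n: "card (carrier G) = n"
    and N: "N \<subseteq> {1..n}" "card N = m" and P: "partition_on N P" "2 * card P = m"
  shows "card {chi\<in>bad_charvecs G n m. nontriv_coords G n chi = N \<and> P \<in> killing_partitions G chi N} * n
           \<le> 2 ^ 2 ^ m * n ^ card P"
proof -
  let ?X = "{chi\<in>bad_charvecs G n m. nontriv_coords G n chi = N \<and> P \<in> killing_partitions G chi N}"
  let ?Qs = "{Q\<in>Pow (Pow N). Q \<noteq> P \<and> partition_on N Q \<and> (\<forall>q\<in>Q. card q = 2)}"
  let ?Y = "\<lambda>Q. {chi\<in>charvecs G n. nontriv_coords G n chi = N \<and>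
                  P \<in> killing_partitions G chi N \<and> Q \<in> killing_partitions G chi N}"
  have finN: "finite N" using N(1) finite_subset by blast
  have cover: "?X \<subseteq> (\<Union>Q\<in>?Qs. ?Y Q)"
    using bad_killed_by_pairing_subset[OF N(2) P(2)] .
  have pairs: "\<forall>p\<in>P. card p = 2" if "chi \<in> ?X" for chi
  proof -
    have "chi \<in> charvecs G n" "nontriv_coords G n chi = N" "P \<in> killing_partitions G chi N"
      using that by (simp_all add: bad_charvecs_def)
    then show ?thesis using card_blocks_eq_2[of chi G n P] N(2) P(2) by simp
  qed
  show ?thesis
  proof (cases "?X = {}")
    case False
    then have "\<forall>p\<in>P. card p = 2" using pairs by blast
    have "card ?X \<le> card (\<Union>Q\<in>?Qs. ?Y Q)"
      by (rule card_mono[OF finite_subset[OF _ finite_charvecs[OF G]] cover]) blast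
    also have "\<dots> \<le> (\<Sum>Q\<in>?Qs. card (?Y Q))"
      using finN by (intro card_UN_le) simp
    also have "\<dots> \<le> (\<Sum>Q\<in>?Qs. n ^ (card P - 1))"
      using card_killed_by_two_pairings_le[OF G N(1) P(1) \<open>\<forall>p\<in>P. card p = 2\<close>] n
      by (intro sum_mono) auto
    also have "\<dots> \<le> 2 ^ 2 ^ m * n ^ (card P - 1)"
    proof -
      have "card ?Qs \<le> card (Pow (Pow N))"
        using finN by (intro card_mono) auto
      then have "card ?Qs \<le> 2 ^ 2 ^ m"
        using finN N(2) by (simp add: card_Pow)
      then show ?thesis by (simp add: mult_right_mono)
    qed
    finally have bound: "card ?X \<le> 2 ^ 2 ^ m * n ^ (card P - 1)" .
    have "card P \<noteq> 0"
    proof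
      assume "card P = 0"
      then have "N = {}" using P(2) N(2) finN by simp
      then have "P = {}" "\<forall>Q. partition_on N Q \<longrightarrow> Q = {}"
        using P(1) partition_on_empty by blast+
      then have "?Qs = {}" by blast
      then have "?X = {}" using cover by (simp only: UN_empty subset_empty)
      then show False using False by simp
    qed
    then have "n ^ (card P - 1) * n = n ^ card P"
      by (cases "card P") (simp_all add: mult.commute)
    then have eq: "2 ^ 2 ^ m * n ^ (card P - 1) * n = 2 ^ 2 ^ m * n ^ card P"
      by (simp only: mult.assoc)
    show ?thesis
      using mult_right_mono[OF bound zero_le, of n] by (simp only: eq)
  qed (simp only: card.empty mult_0 zero_le)
qed

lemma card_carrier_pos: "group G \<Longrightarrow> finite (carrier G) \<Longrightarrow> 0 < card (carrier G)"
  using card_gt_0_iff group.is_monoid monoid.one_closed by blast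

lemma card_bad_killed_le:
  assumes G: "group G" "finite (carrier G)" and n: "card (carrier G) = n"
    and N: "N \<subseteq> {1..n}" "card N = m"
  shows "n ^ (3 * card P)
           * card {chi\<in>bad_charvecs G n m. nontriv_coords G n chi = N \<and> P \<in> killing_partitions G chi N}
           * n \<le> 2 ^ 2 ^ m * n ^ (2 * m)"
proof (cases "{chi\<in>bad_charvecs G n m. nontriv_coords G n chi = N \<and> P \<in> killing_partitions G chi N} = {}")
  case False
  let ?X = "{chi\<in>bad_charvecs G n m. nontriv_coords G n chi = N \<and> P \<in> killing_partitions G chi N}"
  obtain chi where "chi \<in> ?X" using False by blast
  then have chi: "chi \<in> charvecs G n" "nontriv_coords G n chi = N" "P \<in> killing_partitions G chi N"
    by (simp_all add: bad_charvecs_def)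
  have part: "partition_on N P" using chi(3) by (rule killing_partitionsD)
  have n_pos: "0 < n" using card_carrier_pos[OF G] n by simp
  have "2 * card P \<le> m"
    using two_card_killing_partition_le[OF chi(1)] chi(2,3) N(2) by simp
  then consider "2 * card P < m" | "2 * card P = m" by linarith
  then show ?thesis
  proof cases
    case 1
    have "card ?X \<le> card {chi\<in>charvecs G n. nontriv_coords G n chi = N \<and> P \<in> killing_partitions G chi N}"
      using finite_charvecs[OF G] by (intro card_mono) (auto simp: bad_charvecs_def)
    also have "\<dots> \<le> n ^ (m - card P)"
      using card_killed_le[OF G N(1) part] n N(2) by simp
    finally have "n ^ (3 * card P) * card ?X * n \<le> n ^ (3 * card P) * n ^ (m - card P) * n"
      by simp
    also have "\<dots> = n ^ (3 * card P + (m - card P) + 1)"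
      by (simp add: power_add)
    also have "\<dots> \<le> n ^ (2 * m)"
      using n_pos 1 by (intro power_increasing) auto
    finally show ?thesis by (simp add: order_trans)
  next
    case 2
    have "n ^ (3 * card P) * card ?X * n \<le> n ^ (3 * card P) * (2 ^ 2 ^ m * n ^ card P)"
      using card_bad_killed_by_pairing_le[OF G n N part 2] by (simp add: mult.assoc)
    also have "\<dots> = 2 ^ 2 ^ m * n ^ (2 * m)"
      using 2 by (simp add: power_add[symmetric] mult_ac flip: 2)
    finally show ?thesis .
  qed
qed (simp only: card.empty mult_0_right mult_0 zero_le)

lemma sum_killing_partitions_regroup:
  fixes f :: "nat set set \<Rightarrow> nat"
  assumes X: "finite X" and Ns: "finite Ns" "\<forall>chi\<in>X. nontriv_coords G n chi \<in> Ns"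
  shows "(\<Sum>chi\<in>X. \<Sum>P\<in>killing_partitions G chi (nontriv_coords G n chi). f P)
    = (\<Sum>N\<in>Ns. \<Sum>P\<in>Pow (Pow N).
         f P * card {chi\<in>X. nontriv_coords G n chi = N \<and> P \<in> killing_partitions G chi N})"
proof -
  let ?c = "\<lambda>chi N P. if nontriv_coords G n chi = N \<and> P \<in> killing_partitions G chi N then f P else 0"
  have "(\<Sum>P\<in>killing_partitions G chi (nontriv_coords G n chi). f P)
      = (\<Sum>N\<in>Ns. \<Sum>P\<in>Pow (Pow N). ?c chi N P)" if chi: "chi \<in> X" for chi
  proof -
    let ?N = "nontriv_coords G n chi"
    have "(\<Sum>N\<in>Ns. \<Sum>P\<in>Pow (Pow N). ?c chi N P)
        = (\<Sum>N\<in>Ns. if N = ?N then \<Sum>P\<in>Pow (Pow N). if P \<in> killing_partitions G chi N then f P else 0 else 0)"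
      by (intro sum.cong refl) auto
    also have "\<dots> = (\<Sum>P\<in>Pow (Pow ?N). if P \<in> killing_partitions G chi ?N then f P else 0)"
      using Ns chi by (simp add: sum.delta')
    also have "\<dots> = (\<Sum>P\<in>{P\<in>Pow (Pow ?N). P \<in> killing_partitions G chi ?N}. f P)"
      using finite_nontriv_coords by (intro sum.inter_filter[symmetric]) simp
    also have "{P\<in>Pow (Pow ?N). P \<in> killing_partitions G chi ?N} = killing_partitions G chi ?N"
      using killing_partitions_subset_Pow_Pow by blast
    finally show ?thesis by simp
  qed
  then have "(\<Sum>chi\<in>X. \<Sum>P\<in>killing_partitions G chi (nontriv_coords G n chi). f P)
      = (\<Sum>chi\<in>X. \<Sum>N\<in>Ns. \<Sum>P\<in>Pow (Pow N). ?c chi N P)"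
    by (rule sum.cong[OF refl])
  also have "\<dots> = (\<Sum>N\<in>Ns. \<Sum>chi\<in>X. \<Sum>P\<in>Pow (Pow N). ?c chi N P)"
    by (rule sum.swap)
  also have "\<dots> = (\<Sum>N\<in>Ns. \<Sum>P\<in>Pow (Pow N). \<Sum>chi\<in>X. ?c chi N P)"
    by (intro sum.cong refl sum.swap)
  also have "\<dots> = (\<Sum>N\<in>Ns. \<Sum>P\<in>Pow (Pow N).
         f P * card {chi\<in>X. nontriv_coords G n chi = N \<and> P \<in> killing_partitions G chi N})"
    using X by (intro sum.cong refl) (simp add: sum.inter_filter[symmetric] mult.commute)
  finally show ?thesis .
qed

lemma sum_bad_cube_weight_le:
  assumes G: "group G" "finite (carrier G)" and n: "card (carrier G) = n"
  shows "(\<Sum>chi\<in>bad_charvecs G n m. \<Sum>P\<in>killing_partitions G chi (nontriv_coords G n chi).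
            n ^ (3 * card P)) * n
         \<le> 2 ^ 2 ^ m * 2 ^ 2 ^ m * n ^ (3 * m)"
proof -
  define Ns where "Ns = {N. N \<subseteq> {1..n} \<and> card N = m}"
  let ?X = "\<lambda>N P. {chi\<in>bad_charvecs G n m. nontriv_coords G n chi = N \<and> P \<in> killing_partitions G chi N}"
  have Ns: "finite Ns" "card Ns \<le> n ^ m"
  proof -
    have "card Ns = n choose m" unfolding Ns_def using n_subsets[of "{1..n}" m] by simp
    then show "card Ns \<le> n ^ m"
      by (cases "m \<le> n") (auto simp: binomial_le_pow binomial_eq_0)
    show "finite Ns" unfolding Ns_def by (rule finite_subset[of _ "Pow {1..n}"]) auto
  qed
  have "\<forall>chi\<in>bad_charvecs G n m. nontriv_coords G n chi \<in> Ns"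
    unfolding Ns_def bad_charvecs_def sparse_def using nontriv_coords_subset by blast
  then have "(\<Sum>chi\<in>bad_charvecs G n m. \<Sum>P\<in>killing_partitions G chi (nontriv_coords G n chi).
            n ^ (3 * card P)) * n
      = (\<Sum>N\<in>Ns. \<Sum>P\<in>Pow (Pow N). n ^ (3 * card P) * card (?X N P) * n)"
    using sum_killing_partitions_regroup[OF finite_bad_charvecs[OF G] Ns(1)]
    by (simp add: sum_distrib_right)
  also have "\<dots> \<le> (\<Sum>N\<in>Ns. \<Sum>P\<in>Pow (Pow N). 2 ^ 2 ^ m * n ^ (2 * m))"
    using card_bad_killed_le[OF G n] unfolding Ns_def by (intro sum_mono) auto
  also have "\<dots> = card Ns * (2 ^ 2 ^ m * (2 ^ 2 ^ m * n ^ (2 * m)))"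
  proof -
    have "card (Pow (Pow N)) = 2 ^ 2 ^ m" if "N \<in> Ns" for N
      using that finite_subset[of N "{1..n}"] unfolding Ns_def by (simp add: card_Pow)
    then show ?thesis by simp
  qed
  also have "\<dots> \<le> n ^ m * (2 ^ 2 ^ m * (2 ^ 2 ^ m * n ^ (2 * m)))"
    using Ns(2) by (rule mult_right_mono) simp
  also have "\<dots> = 2 ^ 2 ^ m * 2 ^ 2 ^ m * n ^ (3 * m)"
    by (simp add: power_add[symmetric] mult_ac)
  finally show ?thesis .
qed

section \<open>The cube sum over bad character vectors\<close>

lemma pow_mult_fact_diff_le:
  assumes "m \<le> n"
  shows "real n ^ m * fact (n - m) \<le> real m ^ m * fact n"
proof -
  have "n \<le> m * Suc j" if "j \<in> {n - m..<n}" for j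
  proof -
    have "1 \<le> m" using that by auto
    then have "1 * (n - m) \<le> m * (n - m)" by (rule mult_le_mono1)
    then have "n \<le> m * (n - m) + m" using assms by linarith
    also have "\<dots> \<le> m * j + m" using that by simp
    finally show ?thesis by simp
  qed
  then have le: "real n \<le> real m * real (Suc j)" if "j \<in> {n - m..<n}" for j
    using that by (metis of_nat_le_iff of_nat_mult)
  have "real n ^ m = (\<Prod>j\<in>{n - m..<n}. real n)"
    using assms by simp
  also have "\<dots> \<le> (\<Prod>j\<in>{n - m..<n}. real m * real (Suc j))"
    by (rule prod_mono) (use le in auto)
  also have "\<dots> = real m ^ m * real (\<Prod>j\<in>{n - m..<n}. Suc j)"
    using assms by (simp add: prod.distrib)
  finally have "real n ^ m * fact (n - m) \<le> real m ^ m * real (\<Prod>j\<in>{n - m..<n}. Suc j) * fact (n - m)"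
    by (simp add: mult_right_mono)
  also have "\<dots> = real m ^ m * fact n"
    by (simp only: fact_split[OF assms, where 'a=real] mult.assoc)
  finally show ?thesis .
qed

lemma sum_power_le_card_power_mult_sum_power:
  fixes a :: "'b \<Rightarrow> real"
  assumes "finite K" "\<And>x. x \<in> K \<Longrightarrow> 0 \<le> a x" "0 < k"
  shows "(\<Sum>x\<in>K. a x) ^ k \<le> real (card K) ^ k * (\<Sum>x\<in>K. a x ^ k)"
proof (cases "K = {}")
  case False
  define M where "M = Max (a ` K)"
  have "M \<in> a ` K" unfolding M_def using assms(1) False by simp
  then obtain x where x: "x \<in> K" "a x = M" by blast
  have "(\<Sum>x\<in>K. a x) \<le> real (card K) * M"
    using sum_bounded_above[of K a M] assms(1) unfolding M_def by simp
  then have "(\<Sum>x\<in>K. a x) ^ k \<le> (real (card K) * M) ^ k"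
    using assms by (intro power_mono) (auto simp: sum_nonneg)
  also have "\<dots> = real (card K) ^ k * M ^ k" by (simp add: power_mult_distrib)
  also have "M ^ k \<le> (\<Sum>x\<in>K. a x ^ k)"
    using x assms by (auto intro!: member_le_sum)
  finally show ?thesis by (simp add: mult_left_mono)
qed (use assms(3) in \<open>simp add: power_0_left\<close>)

lemma killing_weight_cube_le:
  assumes "finite I"
  shows "killing_weight G chi I ^ 3 \<le> (2 ^ 2 ^ card I) ^ 3 *
           real (\<Sum>P\<in>killing_partitions G chi I. card (carrier G) ^ (3 * card P))"
proof -
  let ?K = "killing_partitions G chi I"
  have "killing_weight G chi I ^ 3 \<le> real (card ?K) ^ 3 * (\<Sum>P\<in>?K. (real (card (carrier G)) ^ card P) ^ 3)"
    unfolding killing_weight_def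
    using finite_killing_partitions[OF assms] by (intro sum_power_le_card_power_mult_sum_power) auto
  also have "\<dots> \<le> (2 ^ 2 ^ card I) ^ 3 * (\<Sum>P\<in>?K. (real (card (carrier G)) ^ card P) ^ 3)"
    using card_killing_partitions_le[OF assms, of G chi]
    by (intro mult_right_mono power_mono sum_nonneg) (simp_all flip: of_nat_le_iff)
  also have "(\<Sum>P\<in>?K. (real (card (carrier G)) ^ card P) ^ 3)
      = real (\<Sum>P\<in>?K. card (carrier G) ^ (3 * card P))"
    by (simp add: power_mult[symmetric] mult.commute)
  finally show ?thesis .
qed

lemma norm_hat1S_cube_le:
  assumes G: "group G" "finite (carrier G)" and n: "card (carrier G) = n"
    and chi: "chi \<in> charvecs G n" and m: "card (nontriv_coords G n chi) = m"
  shows "real n ^ (3 * m) * cmod (hat1S G n chi) ^ 3 \<le>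
     (fact n / real n ^ n) ^ 3 * (real m ^ m * fact m) ^ 3 * (2 ^ 2 ^ m) ^ 3 *
     real (\<Sum>P\<in>killing_partitions G chi (nontriv_coords G n chi). n ^ (3 * card P))"
proof -
  let ?N = "nontriv_coords G n chi"
  let ?W = "killing_weight G chi ?N"
  have mn: "m \<le> n" using card_mono[OF _ nontriv_coords_subset] m by fastforce
  have "cmod (hat1S G n chi) = fact (n - m) / real n ^ n * cmod (injection_sum G chi ?N)"
    using hat1S_eq_injection_sum[OF G(2) n chi] m by (simp add: norm_mult norm_divide norm_power)
  also have "\<dots> \<le> fact (n - m) / real n ^ n * (fact m * ?W)"
  proof -
    have "\<forall>i\<in>?N. character G (chi i)"
      using charvecs_character[OF chi] nontriv_coords_subset by blast
    then show ?thesis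
      using norm_injection_sum_le[OF G finite_nontriv_coords] m by (intro mult_left_mono) auto
  qed
  finally have "real n ^ m * cmod (hat1S G n chi)
      \<le> real n ^ m * (fact (n - m) / real n ^ n * (fact m * ?W))"
    by (rule mult_left_mono) simp
  also have "\<dots> = (real n ^ m * fact (n - m)) * (fact m * ?W) / real n ^ n"
    by simp
  also have "\<dots> \<le> (real m ^ m * fact n) * (fact m * ?W) / real n ^ n"
    using pow_mult_fact_diff_le[OF mn] killing_weight_nonneg[of G chi ?N]
    by (intro divide_right_mono mult_right_mono) auto
  finally have "(real n ^ m * cmod (hat1S G n chi)) ^ 3
      \<le> ((fact n / real n ^ n) * (real m ^ m * fact m) * ?W) ^ 3"
    by (intro power_mono) (simp_all add: field_simps)
  also have "\<dots> = (fact n / real n ^ n) ^ 3 * (real m ^ m * fact m) ^ 3 * ?W ^ 3"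
    by (simp only: power_mult_distrib)
  also have "\<dots> \<le> (fact n / real n ^ n) ^ 3 * (real m ^ m * fact m) ^ 3 * ((2 ^ 2 ^ m) ^ 3 *
     real (\<Sum>P\<in>killing_partitions G chi ?N. n ^ (3 * card P)))"
    using killing_weight_cube_le[OF finite_nontriv_coords, of G chi] m n
    by (intro mult_left_mono) auto
  finally show ?thesis
    by (simp add: power_mult_distrib power_mult mult_ac)
qed

lemma sum_bad_hat1S_cube_le:
  assumes G: "group G" "finite (carrier G)" and n: "card (carrier G) = n"
  shows "(\<Sum>chi\<in>bad_charvecs G n m. cmod (hat1S G n chi) ^ 3)
    \<le> (real m ^ m * fact m) ^ 3 * (2 ^ 2 ^ m) ^ 3 * (2 ^ 2 ^ m * 2 ^ 2 ^ m) *
       (1 / real n * (fact n / real n ^ n) ^ 3)"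
proof -
  define D :: real where "D = (real m ^ m * fact m) ^ 3 * (2 ^ 2 ^ m) ^ 3"
  define E :: real where "E = 2 ^ 2 ^ m * 2 ^ 2 ^ m"
  define F :: real where "F = (fact n / real n ^ n) ^ 3"
  define w where "w chi = (\<Sum>P\<in>killing_partitions G chi (nontriv_coords G n chi). n ^ (3 * card P))"
    for chi
  have n_pos: "0 < real n" using card_carrier_pos[OF G] n by simp
  have "cmod (hat1S G n chi) ^ 3 \<le> F * D * real (w chi) / real n ^ (3 * m)"
    if "chi \<in> bad_charvecs G n m" for chi
  proof -
    have "chi \<in> charvecs G n" "card (nontriv_coords G n chi) = m"
      using that by (simp_all add: bad_charvecs_def sparse_def)
    from norm_hat1S_cube_le[OF G n this] show ?thesis
      using n_pos unfolding D_def F_def w_def by (simp add: pos_le_divide_eq mult_ac)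
  qed
  then have "(\<Sum>chi\<in>bad_charvecs G n m. cmod (hat1S G n chi) ^ 3)
      \<le> (\<Sum>chi\<in>bad_charvecs G n m. F * D * real (w chi) / real n ^ (3 * m))"
    by (rule sum_mono)
  also have "\<dots> = F * D / real n ^ (3 * m) * real (\<Sum>chi\<in>bad_charvecs G n m. w chi)"
    by (simp add: sum_distrib_left)
  also have "\<dots> \<le> F * D / real n ^ (3 * m) * (E * real n ^ (3 * m) / real n)"
  proof -
    have "(\<Sum>chi\<in>bad_charvecs G n m. w chi) * n \<le> 2 ^ 2 ^ m * 2 ^ 2 ^ m * n ^ (3 * m)"
      using sum_bad_cube_weight_le[OF G n, of m] unfolding w_def .
    then have "real ((\<Sum>chi\<in>bad_charvecs G n m. w chi) * n) \<le> real (2 ^ 2 ^ m * 2 ^ 2 ^ m * n ^ (3 * m))"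
      by (simp only: of_nat_le_iff)
    then have "real (\<Sum>chi\<in>bad_charvecs G n m. w chi) \<le> E * real n ^ (3 * m) / real n"
      using n_pos unfolding E_def by (simp add: pos_le_divide_eq)
    then show ?thesis
      unfolding D_def F_def by (rule mult_left_mono) simp
  qed
  also have "\<dots> = D * E * (1 / real n * F)"
    using n_pos by (simp add: field_simps)
  finally show ?thesis unfolding D_def E_def F_def .
qed

theorem lemma3p2:
  fixes m :: nat
  shows "\<exists>C::real. \<forall>G :: nat monoid. comm_group G \<and> finite (carrier G) \<longrightarrow>
     (let n = card (carrier G) in
       (\<Sum>chi\<in>{chi\<in>charvecs G n. sparse G n m chi \<and> chi \<notin> frakM G n m}.
           cmod (hat1S G n chi) ^ 3)
       \<le> C * ((1 / real n) * (fact n / real n ^ n) ^ 3))"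
proof (intro exI allI impI)
  fix G :: "nat monoid"
  assume "comm_group G \<and> finite (carrier G)"
  then have "group G" "finite (carrier G)" by (auto dest: comm_group.axioms(2))
  from sum_bad_hat1S_cube_le[OF this refl, of m] show "let n = card (carrier G) in
       (\<Sum>chi\<in>{chi\<in>charvecs G n. sparse G n m chi \<and> chi \<notin> frakM G n m}.
           cmod (hat1S G n chi) ^ 3)
       \<le> (real m ^ m * fact m) ^ 3 * (2 ^ 2 ^ m) ^ 3 * (2 ^ 2 ^ m * 2 ^ 2 ^ m) *
         ((1 / real n) * (fact n / real n ^ n) ^ 3)"
    unfolding bad_charvecs_def Let_def .
qed

end
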